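(* For every integer $n\ge 2$, the $n$-abomination $\mathbb{X}_n$ is an Esakia space.
   Context: $\mathbb{N}=\{0,1,2,\dots\}$. Fix an integer $n\ge 2$ and put $N=2^{n+1}-1$. Let $T_n$ be the set of triples $\langle k_1,k_2,k_3\rangle$ of pairwise distinct natural numbers $\le N$, with a fixed enumeration $T_n=\{s_0,\dots,s_t\}$. Let $U_n$ be a set of pairwise distinct elements $a_m,b_m$ ($m\in\mathbb{N}$) and $c_{m,k},d_{m,k},e^a_{m,k},e^b_{m,k}$ ($m\in\mathbb{N}$, $0\le k\le N$). Define $x\prec y$ on $U_n$ iff one of: (1) $x=a_m$ and $y\in\{c_{m,k_1},c_{m,k_2}\}$, where $s_j=\langle k_1,k_2,k_3\rangle$ with $j\equiv m \bmod (t+1)$; (2) $x=b_m$ and $y\in\{c_{m,k_1},c_{m,k_3}\}$, with $s_j$ as in (1); (3) $m\ge1$, $x=c_{m,k}$, and either $y=e^a_{m-1,j}$ with $j\ne k$, or $y=e^b_{m-1,i}$ for any $i\le N$; (4) $x=d_{m,k}$ and $y=c_{m,j}$ with $j\neq k$; (5) $x=e^a_{m,k}$ and either $y=a_m$ or $y=d_{m,j}$ with $j\ne k$; (6) $x=e^b_{m,k}$ and either $y=b_m$ or $y=d_{m,j}$ with $j\ne k$. Let $\le$ be the reflexive transitive closure of $\prec$ (a partial order on $U_n$). The root compactification of a poset is obtained by adding a new least element $\bot$ and declaring a set $U$ open iff $\bot\notin U$ or $U$ is cofinite. The $n$-abomination $\mathbb{X}_n$ is the root compactification of $\langle U_n,\le\rangle$.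 An Esakia space is a compact ordered topological space in which ${\downarrow}U$ is clopen for every clopen $U$ and whenever $x\not\le y$ there is a clopen upset containing $x$ but not $y$. *)

theory Defs
  imports "HOL-Analysis.Analysis"
begin

text \<open>Elements of U_n: a_m, b_m, c_{m,k}, d_{m,k}, e^a_{m,k}, e^b_{m,k}.\<close>
datatype uel = A nat | B nat | C nat nat | D nat nat | EA nat nat | EB nat nat

definition bigN :: "nat \<Rightarrow> nat" where
  "bigN n = 2 ^ (n + 1) - 1"

definition triples :: "nat \<Rightarrow> (nat \<times> nat \<times> nat) set" where
  "triples n = {(k1, k2, k3). k1 \<le> bigN n \<and> k2 \<le> bigN n \<and> k3 \<le> bigN n
                 \<and> k1 \<noteq> k2 \<and> k1 \<noteq> k3 \<and> k2 \<noteq> k3}"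

definition Uset :: "nat \<Rightarrow> uel set" where
  "Uset n = range A \<union> range B
     \<union> {C m k | m k. k \<le> bigN n} \<union> {D m k | m k. k \<le> bigN n}
     \<union> {EA m k | m k. k \<le> bigN n} \<union> {EB m k | m k. k \<le> bigN n}"

text \<open>The covering relation \<prec> on U_n, for an enumeration s_0,...,s_t of T_n.\<close>
fun prec :: "nat \<Rightarrow> nat \<Rightarrow> (nat \<Rightarrow> nat \<times> nat \<times> nat) \<Rightarrow> uel \<Rightarrow> uel \<Rightarrow> bool" where
  "prec n t s (A m) y =
     (case s (m mod (t + 1)) of (k1, k2, k3) \<Rightarrow> y = C m k1 \<or> y = C m k2)"
| "prec n t s (B m) y =
     (case s (m mod (t + 1)) of (k1, k2, k3) \<Rightarrow> y = C m k1 \<or> y = C m k3)"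
| "prec n t s (C m k) y =
     (1 \<le> m \<and> k \<le> bigN n \<and>
      ((\<exists>j. j \<le> bigN n \<and> j \<noteq> k \<and> y = EA (m - 1) j) \<or>
       (\<exists>i. i \<le> bigN n \<and> y = EB (m - 1) i)))"
| "prec n t s (D m k) y =
     (k \<le> bigN n \<and> (\<exists>j. j \<le> bigN n \<and> j \<noteq> k \<and> y = C m j))"
| "prec n t s (EA m k) y =
     (k \<le> bigN n \<and> (y = A m \<or> (\<exists>j. j \<le> bigN n \<and> j \<noteq> k \<and> y = D m j)))"
| "prec n t s (EB m k) y =
     (k \<le> bigN n \<and> (y = B m \<or> (\<exists>j. j \<le> bigN n \<and> j \<noteq> k \<and> y = D m j)))"

definition Ule :: "nat \<Rightarrow> nat \<Rightarrow> (nat \<Rightarrow> nat \<times> nat \<times> nat) \<Rightarrow> uel \<Rightarrow> uel \<Rightarrow> bool" where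
  "Ule n t s = (prec n t s)\<^sup>*\<^sup>*"

text \<open>Root compactification of a poset (P, le): the new least element \<bottom> is None.\<close>
definition root_carrier :: "'a set \<Rightarrow> 'a option set" where
  "root_carrier P = insert None (Some ` P)"

definition root_le :: "('a \<Rightarrow> 'a \<Rightarrow> bool) \<Rightarrow> 'a option \<Rightarrow> 'a option \<Rightarrow> bool" where
  "root_le le x y = (case x of None \<Rightarrow> True
                      | Some a \<Rightarrow> (case y of None \<Rightarrow> False | Some b \<Rightarrow> le a b))"

definition root_top :: "'a set \<Rightarrow> 'a option topology" where
  "root_top P = topology (\<lambda>U. U \<subseteq> root_carrier P \<and>
                               (None \<notin> U \<or> finite (root_carrier P - U)))"

definition down_set :: "'a topology \<Rightarrow> ('a \<Rightarrow> 'a \<Rightarrow> bool) \<Rightarrow> 'a set \<Rightarrow> 'a set" where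
  "down_set T le U = {x \<in> topspace T. \<exists>u\<in>U. le x u}"

definition is_upset :: "'a topology \<Rightarrow> ('a \<Rightarrow> 'a \<Rightarrow> bool) \<Rightarrow> 'a set \<Rightarrow> bool" where
  "is_upset T le U \<longleftrightarrow> U \<subseteq> topspace T \<and> (\<forall>x\<in>U. \<forall>y\<in>topspace T. le x y \<longrightarrow> y \<in> U)"

definition esakia_space :: "'a topology \<Rightarrow> ('a \<Rightarrow> 'a \<Rightarrow> bool) \<Rightarrow> bool" where
  "esakia_space T le \<longleftrightarrow>
     compact_space T \<and>
     partial_order_on (topspace T) {(x, y). x \<in> topspace T \<and> y \<in> topspace T \<and> le x y} \<and>
     (\<forall>U. closedin T U \<and> openin T U \<longrightarrow>
          closedin T (down_set T le U) \<and> openin T (down_set T le U)) \<and>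
     (\<forall>x\<in>topspace T. \<forall>y\<in>topspace T. \<not> le x y \<longrightarrow>
        (\<exists>U. closedin T U \<and> openin T U \<and> is_upset T le U \<and> x \<in> U \<and> y \<notin> U))"

definition abom_top :: "nat \<Rightarrow> uel option topology" where
  "abom_top n = root_top (Uset n)"

definition abom_le :: "nat \<Rightarrow> nat \<Rightarrow> (nat \<Rightarrow> nat \<times> nat \<times> nat) \<Rightarrow> uel option \<Rightarrow> uel option \<Rightarrow> bool" where
  "abom_le n t s = root_le (Ule n t s)"

end

theory Submission
  imports Defs
begin

(* The root compactification of a poset P is an Esakia space as soon as every principal
   upset of P is finite and every principal downset is cofinite: its clopen sets are the
   finite subsets of P together with the cofinite sets containing the root, so finite
   principal upsets separate points, and the downset of a nonempty clopen set is cofinite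
   and contains the root, since it contains either that set or a principal downset.

   In U_n call m the level of a_m, b_m, c_{m,k}, d_{m,k}, e^a_{m,k}, e^b_{m,k}. A covering
   step x \<prec> y never increases the level, so principal upsets are finite. Every element of level m
   lies below some c_{m,k}, and c_{m+1,k} lies below every element of level m except
   e^a_{m,k}; iterating, c_{m+1,k} lies below every element of level less than m. Hence x
   lies below u whenever the level of x exceeds that of u by at least two, and principal
   downsets are cofinite. *)

lemma root_carrier_iff [simp]:
  "None \<in> root_carrier P" "Some a \<in> root_carrier P \<longleftrightarrow> a \<in> P"
  by (auto simp: root_carrier_def)

lemma root_le_simps [simp]:
  "root_le le None y" "\<not> root_le le (Some a) None" "root_le le (Some a) (Some b) \<longleftrightarrow> le a b"
  by (auto simp: root_le_def)

lemma istopology_root_top: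
  "istopology (\<lambda>U. U \<subseteq> root_carrier P \<and> (None \<notin> U \<or> finite (root_carrier P - U)))"
  (is "istopology ?L")
proof -
  have "?L (S \<inter> T)" if "?L S" "?L T" for S T
  proof -
    have "root_carrier P - (S \<inter> T) = (root_carrier P - S) \<union> (root_carrier P - T)" by blast
    then show ?thesis using that by auto
  qed
  moreover have "?L (\<Union>\<K>)" if \<K>: "\<forall>K\<in>\<K>. ?L K" for \<K>
  proof (cases "None \<in> \<Union>\<K>")
    case True
    then obtain K where "K \<in> \<K>" "None \<in> K" by blast
    with \<K> have "finite (root_carrier P - K)" by blast
    moreover have "root_carrier P - \<Union>\<K> \<subseteq> root_carrier P - K" using \<open>K \<in> \<K>\<close> by blast
    ultimately show ?thesis using \<K> finite_subset by blast
  qed (use \<K> in blast)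
  ultimately show ?thesis unfolding istopology_def by blast
qed

lemma openin_root_top:
  "openin (root_top P) U \<longleftrightarrow> U \<subseteq> root_carrier P \<and> (None \<notin> U \<or> finite (root_carrier P - U))"
  by (simp only: root_top_def topology_inverse'[OF istopology_root_top])

lemma topspace_root_top: "topspace (root_top P) = root_carrier P"
proof (rule antisym)
  show "topspace (root_top P) \<subseteq> root_carrier P"
    unfolding topspace_def openin_root_top by blast
  show "root_carrier P \<subseteq> topspace (root_top P)"
    by (rule openin_subset) (simp add: openin_root_top)
qed

lemma closedin_root_top:
  "closedin (root_top P) U \<longleftrightarrow> U \<subseteq> root_carrier P \<and> (None \<in> U \<or> finite U)"
proof -
  have "root_carrier P - (root_carrier P - U) = U" if "U \<subseteq> root_carrier P"
    using that by blast
  then show ?thesis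
    by (auto simp: closedin_def topspace_root_top openin_root_top)
qed

lemma clopen_root_top_iff:
  "closedin (root_top P) U \<and> openin (root_top P) U \<longleftrightarrow>
     U \<subseteq> root_carrier P \<and> (if None \<in> U then finite (root_carrier P - U) else finite U)"
  unfolding closedin_root_top openin_root_top by (cases "None \<in> U") auto

lemma compact_space_root_top: "compact_space (root_top P)"
  unfolding compact_space_alt topspace_root_top
proof (intro allI impI)
  fix \<U> assume \<U>: "(\<forall>U\<in>\<U>. openin (root_top P) U) \<and> root_carrier P \<subseteq> \<Union>\<U>"
  then have "None \<in> \<Union>\<U>" using root_carrier_iff(1) by (elim conjE subsetD)
  then obtain U0 where U0: "U0 \<in> \<U>" "None \<in> U0" by blast
  with \<U> have "openin (root_top P) U0" by blast
  with U0(2) have fin: "finite (root_carrier P - U0)" by (simp add: openin_root_top)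
  have "\<forall>x\<in>root_carrier P - U0. \<exists>U\<in>\<U>. x \<in> U" using \<U> by blast
  then obtain f where f: "\<forall>x\<in>root_carrier P - U0. f x \<in> \<U> \<and> x \<in> f x" by metis
  show "\<exists>\<F>. finite \<F> \<and> \<F> \<subseteq> \<U> \<and> root_carrier P \<subseteq> \<Union>\<F>"
    by (rule exI[of _ "insert U0 (f ` (root_carrier P - U0))"]) (use fin f U0 in auto)
qed

lemma partial_order_on_root_le:
  assumes "reflp_on P le" "transp_on P le" "antisymp_on P le"
  shows "partial_order_on (root_carrier P)
           {(x, y). x \<in> root_carrier P \<and> y \<in> root_carrier P \<and> root_le le x y}"
    (is "partial_order_on ?C ?R")
proof -
  have "refl_on ?C ?R"
    using assms(1) by (auto simp: refl_on_def root_carrier_def dest: reflp_onD)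
  moreover have "trans ?R"
    using assms(2) unfolding trans_def
    by (auto simp: root_carrier_def root_le_def split: option.splits dest: transp_onD)
  moreover have "antisym ?R"
    using assms(3) unfolding antisym_def
    by (auto simp: root_carrier_def root_le_def split: option.splits dest: antisymp_onD)
  ultimately show ?thesis by (auto simp: partial_order_on_def preorder_on_def)
qed

lemma clopen_down_set_root_top:
  assumes refl: "reflp_on P le"
    and cofinite_below: "\<And>u. u \<in> P \<Longrightarrow> finite {x \<in> P. \<not> le x u}"
    and clopen: "closedin (root_top P) U \<and> openin (root_top P) U"
  shows "closedin (root_top P) (down_set (root_top P) (root_le le) U) \<and>
         openin (root_top P) (down_set (root_top P) (root_le le) U)"
proof -
  let ?C = "root_carrier P"
  define D where "D = down_set (root_top P) (root_le le) U"
  have D: "D = {x \<in> ?C. \<exists>u\<in>U. root_le le x u}"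
    by (simp add: D_def down_set_def topspace_root_top)
  have U: "U \<subseteq> ?C" "if None \<in> U then finite (?C - U) else finite U"
    using clopen by (simp_all add: clopen_root_top_iff)
  have "None \<in> D \<and> finite (?C - D)" if "U \<noteq> {}"
  proof -
    have "None \<in> D" using that by (auto simp: D)
    moreover have "finite (?C - D)"
    proof (cases "None \<in> U")
      case True
      have "U \<subseteq> D"
      proof
        fix x assume "x \<in> U"
        moreover have "x \<in> ?C" using \<open>x \<in> U\<close> U(1) by blast
        then have "root_le le x x" using refl by (cases x) (auto simp: reflp_on_def)
        ultimately show "x \<in> D" using U(1) by (auto simp: D)
      qed
      then show ?thesis using True U(2) finite_subset[of "?C - D" "?C - U"] by auto
    next
      case False
      then obtain u where u: "Some u \<in> U" using \<open>U \<noteq> {}\<close> by (metis ex_in_conv not_None_eq)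
      then have "?C - D \<subseteq> Some ` {x \<in> P. \<not> le x u}"
        using U(1) by (force simp: D root_carrier_def)
      moreover have "u \<in> P" using u U(1) by auto
      ultimately show ?thesis using cofinite_below finite_subset by blast
    qed
    ultimately show ?thesis ..
  qed
  moreover have "D \<subseteq> ?C" by (auto simp: D)
  ultimately have "closedin (root_top P) D \<and> openin (root_top P) D"
    by (cases "U = {}") (auto simp: clopen_root_top_iff D)
  then show ?thesis unfolding D_def .
qed

lemma separating_clopen_upset_root_top:
  assumes refl: "reflp_on P le" and trans: "transp_on P le"
    and finite_above: "\<And>a. a \<in> P \<Longrightarrow> finite {b \<in> P. le a b}"
    and x: "x \<in> root_carrier P" and y: "y \<in> root_carrier P" and not_le: "\<not> root_le le x y"
  shows "\<exists>U. closedin (root_top P) U \<and> openin (root_top P) U \<and>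
             is_upset (root_top P) (root_le le) U \<and> x \<in> U \<and> y \<notin> U"
proof -
  obtain a where a: "x = Some a" "a \<in> P" using x not_le by (cases x) auto
  define U where "U = Some ` {b \<in> P. le a b}"
  have "closedin (root_top P) U \<and> openin (root_top P) U"
    using finite_above[OF a(2)] by (auto simp: U_def clopen_root_top_iff)
  moreover have "is_upset (root_top P) (root_le le) U"
    using a(2) trans
    by (auto simp: is_upset_def topspace_root_top U_def root_carrier_def root_le_def
             split: option.splits dest: transp_onD)
  moreover have "x \<in> U" using a refl by (auto simp: U_def dest: reflp_onD)
  moreover have "y \<notin> U" using a not_le by (auto simp: U_def)
  ultimately show ?thesis by blast
qed

theorem esakia_space_root_top:
  assumes "reflp_on P le" "transp_on P le" "antisymp_on P le"
    and "\<And>a. a \<in> P \<Longrightarrow> finite {b \<in> P. le a b}"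
    and "\<And>u. u \<in> P \<Longrightarrow> finite {x \<in> P. \<not> le x u}"
  shows "esakia_space (root_top P) (root_le le)"
  unfolding esakia_space_def topspace_root_top
  using compact_space_root_top partial_order_on_root_le[OF assms(1-3)]
    clopen_down_set_root_top[OF assms(1,5)] separating_clopen_upset_root_top[OF assms(1,2,4)]
  by blast

fun rank :: "uel \<Rightarrow> nat" where
  "rank (A m) = 4 * m + 2"
| "rank (B m) = 4 * m + 2"
| "rank (C m k) = 4 * m + 1"
| "rank (D m k) = 4 * m + 2"
| "rank (EA m k) = 4 * m + 3"
| "rank (EB m k) = 4 * m + 3"

fun level :: "uel \<Rightarrow> nat" where
  "level (A m) = m"
| "level (B m) = m"
| "level (C m k) = m"
| "level (D m k) = m"
| "level (EA m k) = m"
| "level (EB m k) = m"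

lemma prec_rank_less: "prec n t s x y \<Longrightarrow> rank y < rank x"
  by (cases x) (auto split: prod.splits)

lemma prec_level_le: "prec n t s x y \<Longrightarrow> level y \<le> level x"
  by (cases x) (auto split: prod.splits)

lemma Ule_level_le: "Ule n t s x y \<Longrightarrow> level y \<le> level x"
  unfolding Ule_def by (induction rule: rtranclp_induct) (auto dest: prec_level_le)

lemma reflp_Ule: "reflp (Ule n t s)"
  by (simp add: Ule_def reflp_def)

lemma transp_Ule: "transp (Ule n t s)"
  by (simp add: Ule_def)

lemma antisymp_Ule: "antisymp (Ule n t s)"
proof (rule antisympI)
  have rank_le: "rank y \<le> rank x" if "(prec n t s)\<^sup>*\<^sup>* x y" for x y
    using that by (induction rule: rtranclp_induct) (auto dest: prec_rank_less)
  have rank_less: "rank y < rank x" if "(prec n t s)\<^sup>+\<^sup>+ x y" for x y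
    using that by (induction rule: tranclp_induct) (auto dest: prec_rank_less)
  fix x y assume "Ule n t s x y" "Ule n t s y x"
  then show "x = y"
    unfolding Ule_def using rank_le rank_less by (metis rtranclpD not_le)
qed

lemma Uset_iff [simp]:
  "A m \<in> Uset n" "B m \<in> Uset n"
  "C m k \<in> Uset n \<longleftrightarrow> k \<le> bigN n" "D m k \<in> Uset n \<longleftrightarrow> k \<le> bigN n"
  "EA m k \<in> Uset n \<longleftrightarrow> k \<le> bigN n" "EB m k \<in> Uset n \<longleftrightarrow> k \<le> bigN n"
  by (auto simp: Uset_def)

lemma finite_Uset_level_le: "finite {x \<in> Uset n. level x \<le> M}"
proof (rule finite_subset)
  show "{x \<in> Uset n. level x \<le> M} \<subseteq>
          (\<Union>m\<le>M. \<Union>k\<le>bigN n. {A m, B m, C m k, D m k, EA m k, EB m k})"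
    by (auto simp: Uset_def)
qed simp

lemma one_le_bigN: "1 \<le> bigN n"
proof -
  have pos: "1 \<le> (2::nat) ^ n" by simp
  show ?thesis by (simp add: bigN_def) (use pos in linarith)
qed

lemma ex_other_index: "\<exists>j \<le> bigN n. j \<noteq> k"
  using one_le_bigN[of n] by (cases "k = 0") auto

lemma prec_imp_Ule: "prec n t s x y \<Longrightarrow> Ule n t s x y"
  by (simp add: Ule_def)

lemma Ule_prec_trans: "prec n t s x y \<Longrightarrow> Ule n t s y z \<Longrightarrow> Ule n t s x z"
  by (simp add: Ule_def converse_rtranclp_into_rtranclp)

lemma Ule_C_same_level:
  assumes k: "k \<le> bigN n" and y: "y \<in> Uset n" "level y = p" "y \<noteq> EA p k"
  shows "Ule n t s (C (Suc p) k) y"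
proof (cases y)
  case (A m)
  obtain j where "j \<le> bigN n" "j \<noteq> k" using ex_other_index by blast
  then have "prec n t s (C (Suc p) k) (EA p j)" "prec n t s (EA p j) (A p)" using k by auto
  then show ?thesis using A y(2) by (metis Ule_prec_trans prec_imp_Ule level.simps(1))
next
  case (B m)
  have "prec n t s (C (Suc p) k) (EB p 0)" "prec n t s (EB p 0) (B p)" using k by auto
  then show ?thesis using B y(2) by (metis Ule_prec_trans prec_imp_Ule level.simps(2))
next
  case (C m j)
  obtain j' where j': "j' \<le> bigN n" "j' \<noteq> j" using ex_other_index by blast
  obtain i where i: "i \<le> bigN n" "i \<noteq> j'" using ex_other_index by blast
  have "prec n t s (C (Suc p) k) (EB p i)" "prec n t s (EB p i) (D p j')"
    "prec n t s (D p j') (C p j)"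
    using k i j' C y by auto
  then show ?thesis using C y(2) by (metis Ule_prec_trans prec_imp_Ule level.simps(3))
next
  case (D m j)
  obtain i where i: "i \<le> bigN n" "i \<noteq> j" using ex_other_index by blast
  have "prec n t s (C (Suc p) k) (EB p i)" "prec n t s (EB p i) (D p j)"
    using k i D y by auto
  then show ?thesis using D y(2) by (metis Ule_prec_trans prec_imp_Ule level.simps(4))
qed (use k y in \<open>auto intro: prec_imp_Ule\<close>)

lemma Ule_C_lower_level:
  assumes "k \<le> bigN n" "y \<in> Uset n" "level y < p"
  shows "Ule n t s (C (Suc p) k) y"
  using assms
proof (induction p arbitrary: k)
  case (Suc q)
  obtain j where j: "j \<le> bigN n" "y \<noteq> EA q j"
    using one_le_bigN[of n] by (cases "y = EA q 0") (auto intro: that[of 0] that[of 1])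
  have "Ule n t s (C (Suc (Suc q)) k) (C (Suc q) j)"
    using Ule_C_same_level Suc.prems(1) j(1) by simp
  moreover have "Ule n t s (C (Suc q) j) y"
  proof (cases "level y = q")
    case True
    then show ?thesis using Ule_C_same_level j Suc.prems(2) by blast
  next
    case False
    then show ?thesis using Suc.IH j(1) Suc.prems(2,3) by simp
  qed
  ultimately show ?case using transp_Ule by (metis transpD)
qed simp

lemma ex_Ule_C:
  assumes s: "s ` {..t} \<subseteq> triples n" and x: "x \<in> Uset n"
  shows "\<exists>k \<le> bigN n. Ule n t s x (C (level x) k)"
proof -
  have AB: "\<exists>k \<le> bigN n. prec n t s (A m) (C m k) \<and> prec n t s (B m) (C m k)" for m
  proof -
    obtain k1 k2 k3 where k: "s (m mod (t + 1)) = (k1, k2, k3)"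
      by (cases "s (m mod (t + 1))") auto
    have "s (m mod (t + 1)) \<in> triples n" using s by auto
    then have "k1 \<le> bigN n" using k by (simp add: triples_def)
    then show ?thesis using k by auto
  qed
  show ?thesis
  proof (cases x)
    case (A m)
    with AB[of m] show ?thesis by (metis prec_imp_Ule level.simps(1))
  next
    case (B m)
    with AB[of m] show ?thesis by (metis prec_imp_Ule level.simps(2))
  next
    case (C m k)
    with x show ?thesis using reflp_Ule by (metis Uset_iff(3) level.simps(3) reflpD)
  next
    case (D m k)
    obtain j where j: "j \<le> bigN n" "j \<noteq> k" using ex_other_index by blast
    then have "prec n t s x (C m j)" using D x by simp
    with D j(1) show ?thesis by (metis prec_imp_Ule level.simps(4))
  next
    case (EA m k)
    then have "prec n t s x (A m)" using x by simp
    with AB[of m] EA show ?thesis by (metis Ule_prec_trans prec_imp_Ule level.simps(5))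
  next
    case (EB m k)
    then have "prec n t s x (B m)" using x by simp
    with AB[of m] EB show ?thesis by (metis Ule_prec_trans prec_imp_Ule level.simps(6))
  qed
qed

lemma Ule_if_level_gap:
  assumes s: "s ` {..t} \<subseteq> triples n" and x: "x \<in> Uset n" and u: "u \<in> Uset n"
    and gap: "level u + 2 \<le> level x"
  shows "Ule n t s x u"
proof -
  obtain k where k: "k \<le> bigN n" "Ule n t s x (C (level x) k)" using ex_Ule_C[OF s x] by blast
  obtain p where p: "level x = Suc p" "level u < p" using gap by (cases "level x") auto
  then have "Ule n t s (C (level x) k) u" using Ule_C_lower_level k(1) u by simp
  then show ?thesis using k(2) transp_Ule by (metis transpD)
qed

lemma finite_Ule_above: "finite {y \<in> Uset n. Ule n t s x y}"
  using finite_Uset_level_le[of n "level x"] by (rule rev_finite_subset) (auto dest: Ule_level_le)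

lemma finite_not_Ule_below:
  assumes "s ` {..t} \<subseteq> triples n" "u \<in> Uset n"
  shows "finite {x \<in> Uset n. \<not> Ule n t s x u}"
  using finite_Uset_level_le[of n "level u + 1"]
  by (rule rev_finite_subset) (use Ule_if_level_gap[OF assms(1) _ assms(2)] in force)

theorem mainTheorem4:
  fixes n t :: nat and s :: "nat \<Rightarrow> nat \<times> nat \<times> nat"
  assumes "n \<ge> 2"
    and "bij_betw s {..t} (triples n)"
  shows "esakia_space (abom_top n) (abom_le n t s)"
proof -
  have s: "s ` {..t} \<subseteq> triples n" using assms(2) by (simp add: bij_betw_def)
  show ?thesis
    unfolding abom_top_def abom_le_def
    using reflp_on_subset[OF reflp_Ule] transp_on_subset[OF transp_Ule]
      antisymp_on_subset[OF antisymp_Ule] finite_Ule_above finite_not_Ule_below[OF s]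
    by (intro esakia_space_root_top) auto
qed

end
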